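(* For $n\geq 1$, $$P^{(\mathsf{nest}, \mathsf{cros}, \mathsf{exc}, \mathsf{fix})}(\mathfrak{S}_n; p, q, tq, r)=\left(\frac{1+xt}{1+x}\right)^{n}P^{(\mathsf{nest}, \mathsf{cros},\mathsf{cpk}, \mathsf{exc}, \mathsf{fix})}\left(\mathfrak{S}_n; p, q, \frac{(1+x)^{2}t}{(x+t)(1+xt)},\frac{q(x+t)}{1+xt}, \frac{(1+x)r}{1+xt}\right),$$ equivalently, $$P^{(\mathsf{nest}, \mathsf{cros}, \mathsf{cpk}, \mathsf{exc}, \mathsf{fix})}(\mathfrak{S}_n; p, q, x, qt, r)=\left(\frac{1+u}{1+uv}\right)^{n}P^{(\mathsf{nest}, \mathsf{cros}, \mathsf{exc}, \mathsf{fix})}\left(\mathfrak{S}_n; p, q, qv, \frac{(1+uv)r}{1+u}\right),$$ where $u=\frac{1+t^{2}-2xt-(1-t)\sqrt{(1+t)^{2}-4xt}}{2(1-x)t}$ and $v=\frac{(1+t)^{2}-2xt-(1+t)\sqrt{(1+t)^{2}-4xt}}{2xt}$.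
   Context: $\mathfrak{S}_n$ is the set of permutations of $[n]$. $P^{(\mathsf{stat}_1,\ldots,\mathsf{stat}_m)}(\Omega;t_1,\ldots,t_m)=\sum_{\sigma\in\Omega}\prod_j t_j^{\mathsf{stat}_j\sigma}$. For $\sigma\in\mathfrak{S}_n$: $\mathsf{exc}\,\sigma=\#\{i:\sigma(i)>i\}$, $\mathsf{fix}\,\sigma=\#\{i:\sigma(i)=i\}$, $\mathsf{cpk}\,\sigma=\#\{x\in[n]:\sigma^{-1}(x)<x>\sigma(x)\}$; $\mathsf{nest}_i\sigma=\#\{j: j<i<\sigma(i)<\sigma(j)\text{ or }\sigma(j)<\sigma(i)\le i<j\}$, $\mathsf{cros}_i\sigma=\#\{j: j<i<\sigma(j)<\sigma(i)\text{ or }\sigma(i)<\sigma(j)\le i<j\}$, $\mathsf{nest}=\sum_{i=1}^n\mathsf{nest}_i$, $\mathsf{cros}=\sum_{i=1}^n\mathsf{cros}_i$. *)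

theory Defs
  imports "HOL-Combinatorics.Permutations" Complex_Main
begin

definition Sym :: "nat \<Rightarrow> (nat \<Rightarrow> nat) set" where
  "Sym n = {\<sigma>. \<sigma> permutes {1..n}}"

definition exc :: "nat \<Rightarrow> (nat \<Rightarrow> nat) \<Rightarrow> nat" where
  "exc n \<sigma> = card {i \<in> {1..n}. \<sigma> i > i}"

definition fixp :: "nat \<Rightarrow> (nat \<Rightarrow> nat) \<Rightarrow> nat" where
  "fixp n \<sigma> = card {i \<in> {1..n}. \<sigma> i = i}"

definition cpk :: "nat \<Rightarrow> (nat \<Rightarrow> nat) \<Rightarrow> nat" where
  "cpk n \<sigma> = card {x \<in> {1..n}. inv \<sigma> x < x \<and> x > \<sigma> x}"

definition nest_i :: "nat \<Rightarrow> (nat \<Rightarrow> nat) \<Rightarrow> nat \<Rightarrow> nat" where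
  "nest_i n \<sigma> i = card {j \<in> {1..n}. (j < i \<and> i < \<sigma> i \<and> \<sigma> i < \<sigma> j)
                                    \<or> (\<sigma> j < \<sigma> i \<and> \<sigma> i \<le> i \<and> i < j)}"

definition cros_i :: "nat \<Rightarrow> (nat \<Rightarrow> nat) \<Rightarrow> nat \<Rightarrow> nat" where
  "cros_i n \<sigma> i = card {j \<in> {1..n}. (j < i \<and> i < \<sigma> j \<and> \<sigma> j < \<sigma> i)
                                    \<or> (\<sigma> i < \<sigma> j \<and> \<sigma> j \<le> i \<and> i < j)}"

definition nest :: "nat \<Rightarrow> (nat \<Rightarrow> nat) \<Rightarrow> nat" where
  "nest n \<sigma> = (\<Sum>i=1..n. nest_i n \<sigma> i)"

definition cros :: "nat \<Rightarrow> (nat \<Rightarrow> nat) \<Rightarrow> nat" where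
  "cros n \<sigma> = (\<Sum>i=1..n. cros_i n \<sigma> i)"

definition Pgen :: "('a \<Rightarrow> nat) list \<Rightarrow> 'a set \<Rightarrow> real list \<Rightarrow> real" where
  "Pgen stats \<Omega> ts = (\<Sum>\<sigma>\<in>\<Omega>. prod_list (map2 (\<lambda>s t. t ^ s \<sigma>) stats ts))"

end

theory Submission
  imports Defs
begin

text \<open>Build a permutation by inserting the points \<open>1, 2, \<dots>, n\<close> one at a time and record
  the partial injection formed by the arcs \<open>i \<mapsto> \<sigma> i\<close> whose two ends are already present.
  Inserting \<open>x\<close> increases the number \<open>h\<close> of open arcs (cycle valley), decreases it (cycle
  peak) or leaves it unchanged (cycle double ascent or descent, fixed point), and the nestings
  and crossings created at that moment are read off from the ranks of the arcs at \<open>x\<close> among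
  the open ones; summed over all ranks these give the \<open>(p,q)\<close>-integer \<open>[h]\<^sub>p\<^sub>,\<^sub>q\<close>.
  Summing over all extensions therefore acts on functions of \<open>h\<close> by a transfer operator,
  which depends on the cycle weights only through the product of the valley and peak weights
  (up to a factor \<open>\<mu>\<^sup>h\<close>), through \<open>w\<^sub>d\<^sub>a + q w\<^sub>d\<^sub>d\<close> and through the
  fixed point weight.  The first identity is an instance of this invariance; the second is the
  first with \<open>(t, x)\<close> replaced by \<open>(v, u)\<close>, since \<open>u + v = t (1 + u v)\<close> and
  \<open>(1 + u)\<^sup>2 v = x (u + v) (1 + u v)\<close>.\<close>

section \<open>Partial injections\<close>

definition partial_injections :: "nat \<Rightarrow> (nat \<times> nat) set set" where
  "partial_injections m =
     {R. R \<subseteq> {1..m} \<times> {1..m} \<and> single_valued R \<and> single_valued (R\<inverse>)}"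

definition open_sources :: "nat \<Rightarrow> (nat \<times> nat) set \<Rightarrow> nat set" where
  "open_sources m R = {1..m} - Domain R"

definition open_targets :: "nat \<Rightarrow> (nat \<times> nat) set \<Rightarrow> nat set" where
  "open_targets m R = {1..m} - Range R"

definition trunc :: "nat \<Rightarrow> (nat \<times> nat) set \<Rightarrow> (nat \<times> nat) set" where
  "trunc m R = R \<inter> {1..m} \<times> {1..m}"

definition extensions :: "nat \<Rightarrow> (nat \<times> nat) set \<Rightarrow> (nat \<times> nat) set set" where
  "extensions m R = {R, insert (Suc m, Suc m) R}
     \<union> (\<lambda>u. insert (u, Suc m) R) ` open_sources m R
     \<union> (\<lambda>v. insert (Suc m, v) R) ` open_targets m R
     \<union> (\<lambda>(u, v). insert (u, Suc m) (insert (Suc m, v) R)) ` (open_sources m R \<times> open_targets m R)"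

lemma partial_injectionsD:
  assumes "R \<in> partial_injections m"
  shows "R \<subseteq> {1..m} \<times> {1..m}"
    and "(a, b) \<in> R \<Longrightarrow> (a, c) \<in> R \<Longrightarrow> b = c"
    and "(a, c) \<in> R \<Longrightarrow> (b, c) \<in> R \<Longrightarrow> a = b"
  using assms unfolding partial_injections_def single_valued_def by blast+

lemma finite_partial_injections: "finite (partial_injections m)"
  by (rule finite_subset[of _ "Pow ({1..m} \<times> {1..m})"]) (auto simp: partial_injections_def)

lemma partial_injections_0: "partial_injections 0 = {{}}"
  by (auto simp: partial_injections_def)

lemma trunc_in_partial_injections:
  "R \<in> partial_injections (Suc m) \<Longrightarrow> trunc m R \<in> partial_injections m"
  by (auto simp: partial_injections_def trunc_def single_valued_def)

lemma trunc_id: "R \<in> partial_injections m \<Longrightarrow> trunc m R = R"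
  by (auto simp: partial_injections_def trunc_def)

lemma trunc_insert: "a = Suc m \<or> b = Suc m \<Longrightarrow> trunc m (insert (a, b) R) = trunc m R"
  by (auto simp: trunc_def)

lemma finite_open_sources: "finite (open_sources m R)"
  and finite_open_targets: "finite (open_targets m R)"
  by (simp_all add: open_sources_def open_targets_def)

lemma card_open_targets_eq_sources:
  assumes "R \<in> partial_injections m"
  shows "card (open_targets m R) = card (open_sources m R)"
proof -
  have "inj_on fst R" "inj_on snd R"
    using partial_injectionsD(2,3)[OF assms] by (force simp: inj_on_def)+
  then have "card (Domain R) = card (Range R)"
    by (metis card_image fst_eq_Domain snd_eq_Range)
  moreover have "Domain R \<subseteq> {1..m}" "Range R \<subseteq> {1..m}"
    using partial_injectionsD(1)[OF assms] by blast+
  ultimately show ?thesis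
    unfolding open_sources_def open_targets_def by (simp add: card_Diff_subset finite_subset)
qed

lemma Suc_notin_open_sources: "Suc m \<notin> open_sources m R"
  and Suc_notin_open_targets: "Suc m \<notin> open_targets m R"
  by (simp_all add: open_sources_def open_targets_def)

lemma trunc_Suc_decomp:
  assumes "S \<subseteq> {1..Suc m} \<times> {1..Suc m}"
  shows "S = trunc m S \<union> (\<lambda>u. (u, Suc m)) ` {u. (u, Suc m) \<in> S} \<union> (\<lambda>v. (Suc m, v)) ` {v. (Suc m, v) \<in> S}"
proof (intro equalityI subsetI)
  fix e assume e: "e \<in> S"
  then obtain a b where ab: "e = (a, b)" "a \<in> {1..Suc m}" "b \<in> {1..Suc m}"
    using assms by fastforce
  then consider "a = Suc m" | "b = Suc m" | "a \<in> {1..m}" "b \<in> {1..m}"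
    by (fastforce simp: le_Suc_eq)
  then show "e \<in> trunc m S \<union> (\<lambda>u. (u, Suc m)) ` {u. (u, Suc m) \<in> S} \<union> (\<lambda>v. (Suc m, v)) ` {v. (Suc m, v) \<in> S}"
    by cases (use e ab in \<open>auto simp: trunc_def\<close>)
qed (auto simp: trunc_def)

context
  fixes m :: nat and S :: "(nat \<times> nat) set"
  assumes S: "S \<in> partial_injections (Suc m)" and not_fixed: "(Suc m, Suc m) \<notin> S"
begin

lemma arc_into_Suc:
  assumes u: "(u, Suc m) \<in> S"
  shows "u \<in> open_sources m (trunc m S)" and "{u'. (u', Suc m) \<in> S} = {u}"
proof -
  have "u \<notin> Domain (trunc m S)"
  proof
    assume "u \<in> Domain (trunc m S)"
    then obtain y where "(u, y) \<in> S" "y \<le> m" by (auto simp: trunc_def)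
    then show False using partial_injectionsD(2)[OF S u] by fastforce
  qed
  moreover have "u \<noteq> Suc m" "u \<in> {1..Suc m}"
    using u partial_injectionsD(1)[OF S] not_fixed by auto
  ultimately show "u \<in> open_sources m (trunc m S)"
    by (auto simp: open_sources_def le_Suc_eq)
  show "{u'. (u', Suc m) \<in> S} = {u}"
    using u partial_injectionsD(3)[OF S] by blast
qed

lemma arc_out_of_Suc:
  assumes v: "(Suc m, v) \<in> S"
  shows "v \<in> open_targets m (trunc m S)" and "{v'. (Suc m, v') \<in> S} = {v}"
proof -
  have "v \<notin> Range (trunc m S)"
  proof
    assume "v \<in> Range (trunc m S)"
    then obtain y where "(y, v) \<in> S" "y \<le> m" by (auto simp: trunc_def)
    then show False using partial_injectionsD(3)[OF S v] by fastforce
  qed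
  moreover have "v \<noteq> Suc m" "v \<in> {1..Suc m}"
    using v partial_injectionsD(1)[OF S] not_fixed by auto
  ultimately show "v \<in> open_targets m (trunc m S)"
    by (auto simp: open_targets_def le_Suc_eq)
  show "{v'. (Suc m, v') \<in> S} = {v}"
    using v partial_injectionsD(2)[OF S] by blast
qed

end

context
  fixes m :: nat and R :: "(nat \<times> nat) set"
  assumes R: "R \<in> partial_injections m"
begin

lemma Suc_notin_partial_injection: "(a, Suc m) \<notin> R" "(Suc m, a) \<notin> R"
  using partial_injectionsD(1)[OF R] by auto

lemma fibre_trunc: "{S \<in> partial_injections (Suc m). trunc m S = R} = extensions m R"
proof
  show "{S \<in> partial_injections (Suc m). trunc m S = R} \<subseteq> extensions m R"
  proof
    fix S assume "S \<in> {S \<in> partial_injections (Suc m). trunc m S = R}"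
    then have S: "S \<in> partial_injections (Suc m)" and R_eq: "R = trunc m S" by simp_all
    define In Out where "In = {u. (u, Suc m) \<in> S}" and "Out = {v. (Suc m, v) \<in> S}"
    have S_eq: "S = R \<union> (\<lambda>u. (u, Suc m)) ` In \<union> (\<lambda>v. (Suc m, v)) ` Out"
      unfolding R_eq In_def Out_def by (rule trunc_Suc_decomp[OF partial_injectionsD(1)[OF S]])
    show "S \<in> extensions m R"
    proof (cases "(Suc m, Suc m) \<in> S")
      case True
      then have "In = {Suc m}" "Out = {Suc m}"
        using partial_injectionsD(2,3)[OF S] unfolding In_def Out_def by auto
      then show ?thesis using S_eq by (simp add: extensions_def)
    next
      case False
      have "In = {} \<or> (\<exists>u \<in> open_sources m R. In = {u})"
        using arc_into_Suc[OF S False] unfolding In_def R_eq by blast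
      moreover have "Out = {} \<or> (\<exists>v \<in> open_targets m R. Out = {v})"
        using arc_out_of_Suc[OF S False] unfolding Out_def R_eq by blast
      ultimately show ?thesis using S_eq unfolding extensions_def by auto
    qed
  qed
  show "extensions m R \<subseteq> {S \<in> partial_injections (Suc m). trunc m S = R}"
    using R unfolding extensions_def partial_injections_def open_sources_def
      open_targets_def trunc_def single_valued_def
    by (auto simp: le_Suc_eq)
qed

lemma sum_extensions:
  "sum F (extensions m R) = F R + F (insert (Suc m, Suc m) R)
     + (\<Sum>u\<in>open_sources m R. F (insert (u, Suc m) R))
     + (\<Sum>v\<in>open_targets m R. F (insert (Suc m, v) R))
     + (\<Sum>(u, v)\<in>open_sources m R \<times> open_targets m R. F (insert (u, Suc m) (insert (Suc m, v) R)))"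
proof -
  let ?x = "Suc m" and ?U = "open_sources m R" and ?V = "open_targets m R"
  define A where "A = (\<lambda>u. insert (u, ?x) R) ` ?U"
  define B where "B = (\<lambda>v. insert (?x, v) R) ` ?V"
  define C where "C = (\<lambda>(u, v). insert (u, ?x) (insert (?x, v) R)) ` (?U \<times> ?V)"
  note nx = Suc_notin_partial_injection Suc_notin_open_sources Suc_notin_open_targets
  have "inj_on (\<lambda>u. insert (u, ?x) R) ?U"
    by (rule inj_onI) (metis Pair_inject insert_iff nx(1))
  moreover have "inj_on (\<lambda>v. insert (?x, v) R) ?V"
    by (rule inj_onI) (metis Pair_inject insert_iff nx(2))
  moreover have "inj_on (\<lambda>(u, v). insert (u, ?x) (insert (?x, v) R)) (?U \<times> ?V)"
  proof (rule inj_onI, clarsimp)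
    fix u v u' v' assume "u \<in> ?U" "v \<in> ?V"
      and eq: "insert (u, ?x) (insert (?x, v) R) = insert (u', ?x) (insert (?x, v') R)"
    have "(u, ?x) \<in> insert (u', ?x) (insert (?x, v') R)" "(?x, v) \<in> insert (u', ?x) (insert (?x, v') R)"
      using eq by blast+
    then show "u = u' \<and> v = v'" using nx \<open>u \<in> ?U\<close> \<open>v \<in> ?V\<close> by auto
  qed
  ultimately have "sum F A = (\<Sum>u\<in>?U. F (insert (u, ?x) R))"
    "sum F B = (\<Sum>v\<in>?V. F (insert (?x, v) R))"
    "sum F C = (\<Sum>(u, v)\<in>?U \<times> ?V. F (insert (u, ?x) (insert (?x, v) R)))"
    unfolding A_def B_def C_def by (simp_all add: sum.reindex case_prod_unfold)
  moreover have "R \<noteq> insert (?x, ?x) R" using nx(1) by blast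
  moreover have "{R, insert (?x, ?x) R} \<inter> A = {}" "({R, insert (?x, ?x) R} \<union> A) \<inter> B = {}"
    "({R, insert (?x, ?x) R} \<union> A \<union> B) \<inter> C = {}"
    unfolding A_def B_def C_def using nx
    by (auto simp: set_eq_iff) (metis insertI1 insert_iff prod.inject nx)+
  moreover have "finite A" "finite B" "finite C"
    by (simp_all add: A_def B_def C_def finite_open_sources finite_open_targets)
  ultimately show ?thesis
    unfolding extensions_def A_def[symmetric] B_def[symmetric] C_def[symmetric]
    by (simp add: sum.union_disjoint add.assoc)
qed

end

section \<open>Insertion weights and the transfer operator\<close>

datatype cycle_type = Valley | Peak | Double_Ascent | Double_Descent | Fixed_Point

definition rank_weight :: "real \<Rightarrow> real \<Rightarrow> nat set \<Rightarrow> nat \<Rightarrow> real" where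
  "rank_weight p q U u = p ^ card {w \<in> U. w < u} * q ^ card {w \<in> U. u < w}"

definition pq_int :: "real \<Rightarrow> real \<Rightarrow> nat \<Rightarrow> real" where
  "pq_int p q h = (\<Sum>i<h. p ^ i * q ^ (h - 1 - i))"

lemma pq_int_0 [simp]: "pq_int p q 0 = 0"
  by (simp add: pq_int_def)

lemma pq_int_Suc: "pq_int p q (Suc h) = q * pq_int p q h + p ^ h"
proof -
  have "(\<Sum>i<h. p ^ i * q ^ (h - i)) = q * pq_int p q h"
    unfolding pq_int_def sum_distrib_left
    by (rule sum.cong) (auto simp: Suc_diff_Suc[symmetric] mult.left_commute)
  then show ?thesis by (simp add: pq_int_def)
qed

lemma sum_rank_weight:
  assumes "finite U"
  shows "(\<Sum>u\<in>U. rank_weight p q U u) = pq_int p q (card U)"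
  using assms
proof (induction U rule: finite_linorder_max_induct)
  case (insert b U)
  have "{w \<in> insert b U. w < b} = U" "{w \<in> insert b U. b < w} = {}"
    using insert.hyps by auto
  then have "rank_weight p q (insert b U) b = p ^ card U"
    unfolding rank_weight_def by (simp only: card.empty power_0 mult_1_right)
  moreover have "rank_weight p q (insert b U) u = q * rank_weight p q U u" if "u \<in> U" for u
  proof -
    have "{w \<in> insert b U. u < w} = insert b {w \<in> U. u < w}" "b \<notin> {w \<in> U. u < w}"
      "{w \<in> insert b U. w < u} = {w \<in> U. w < u}"
      using that insert.hyps by auto
    then show ?thesis using insert.hyps(1) by (simp add: rank_weight_def)
  qed
  moreover have "b \<notin> U" using insert.hyps by auto
  ultimately have "(\<Sum>u\<in>insert b U. rank_weight p q (insert b U) u)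
      = p ^ card U + q * (\<Sum>u\<in>U. rank_weight p q U u)"
    by (simp add: insert.hyps(1) sum_distrib_left)
  then show ?case
    using insert by (simp add: pq_int_Suc \<open>b \<notin> U\<close>)
qed simp

text \<open>The sets \<open>In\<close> and \<open>Out\<close> have at
  most one element, so the sums just read off a single rank weight.\<close>

definition ins_weight :: "real \<Rightarrow> real \<Rightarrow> (cycle_type \<Rightarrow> real) \<Rightarrow> nat \<Rightarrow> (nat \<times> nat) set \<Rightarrow> real"
  where
  "ins_weight p q w m S =
    (let x = Suc m; R = trunc m S;
         In = {u \<in> {1..m}. (u, x) \<in> S}; Out = {v \<in> {1..m}. (x, v) \<in> S};
         in_rank = (\<Sum>u\<in>In. rank_weight p q (open_sources m R) u);
         out_rank = (\<Sum>v\<in>Out. rank_weight p q (open_targets m R) v)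
     in if (x, x) \<in> S then w Fixed_Point * p ^ card (open_targets m R)
        else if In \<noteq> {} \<and> Out \<noteq> {} then w Peak * in_rank * out_rank
        else if In \<noteq> {} then w Double_Ascent * in_rank
        else if Out \<noteq> {} then w Double_Descent * q * out_rank
        else w Valley)"

fun path_weight :: "real \<Rightarrow> real \<Rightarrow> (cycle_type \<Rightarrow> real) \<Rightarrow> nat \<Rightarrow> (nat \<times> nat) set \<Rightarrow> real"
  where
    "path_weight p q w 0 S = 1"
  | "path_weight p q w (Suc m) S = path_weight p q w m (trunc m S) * ins_weight p q w m S"

text \<open>At \<open>h = 0\<close> the truncated \<open>h - 1\<close> is harmless because \<open>pq_int p q 0 = 0\<close>.\<close>

definition transfer :: "real \<Rightarrow> real \<Rightarrow> (cycle_type \<Rightarrow> real) \<Rightarrow> (nat \<Rightarrow> real) \<Rightarrow> nat \<Rightarrow> real" where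
  "transfer p q w g h = w Valley * g (h + 1)
     + (w Fixed_Point * p ^ h + (w Double_Ascent + q * w Double_Descent) * pq_int p q h) * g h
     + w Peak * pq_int p q h ^ 2 * g (h - 1)"

context
  fixes m :: nat and R :: "(nat \<times> nat) set"
  assumes R: "R \<in> partial_injections m"
begin

lemma ins_weight_extensions:
  shows "ins_weight p q w m R = w Valley"
    and "ins_weight p q w m (insert (Suc m, Suc m) R)
           = w Fixed_Point * p ^ card (open_targets m R)"
    and "u \<in> open_sources m R \<Longrightarrow> ins_weight p q w m (insert (u, Suc m) R)
           = w Double_Ascent * rank_weight p q (open_sources m R) u"
    and "v \<in> open_targets m R \<Longrightarrow> ins_weight p q w m (insert (Suc m, v) R)
           = w Double_Descent * q * rank_weight p q (open_targets m R) v"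
    and "u \<in> open_sources m R \<Longrightarrow> v \<in> open_targets m R \<Longrightarrow>
         ins_weight p q w m (insert (u, Suc m) (insert (Suc m, v) R))
           = w Peak * rank_weight p q (open_sources m R) u * rank_weight p q (open_targets m R) v"
  using Suc_notin_partial_injection[OF R]
  by (auto simp: ins_weight_def Let_def trunc_insert trunc_id[OF R] Collect_conv_if
      open_sources_def open_targets_def)

lemma open_sources_extensions:
  shows "open_sources (Suc m) R = insert (Suc m) (open_sources m R)"
    and "open_sources (Suc m) (insert (Suc m, Suc m) R) = open_sources m R"
    and "u \<in> open_sources m R \<Longrightarrow>
         open_sources (Suc m) (insert (u, Suc m) R) = insert (Suc m) (open_sources m R - {u})"
    and "open_sources (Suc m) (insert (Suc m, v) R) = open_sources m R"
    and "open_sources (Suc m) (insert (u, Suc m) (insert (Suc m, v) R)) = open_sources m R - {u}"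
  using Suc_notin_partial_injection[OF R] partial_injectionsD(1)[OF R]
  by (auto simp: open_sources_def le_Suc_eq)

lemma sum_extensions_ins_weight:
  "(\<Sum>S\<in>extensions m R. g (card (open_sources (Suc m) S)) * ins_weight p q w m S)
     = transfer p q w g (card (open_sources m R))"
proof -
  let ?U = "open_sources m R" and ?V = "open_targets m R"
  define F where "F S = g (card (open_sources (Suc m) S)) * ins_weight p q w m S" for S
  define h where "h = card ?U"
  have fin: "finite ?U" "finite ?V"
    by (simp_all add: finite_open_sources finite_open_targets)
  have card_V: "card ?V = h"
    using card_open_targets_eq_sources[OF R] by (simp add: h_def)
  have Suc_m: "Suc m \<notin> ?U" "Suc m \<notin> ?U - {u}" for u
    using Suc_notin_open_sources by blast+
  have card_swap: "card (insert (Suc m) (?U - {u})) = h" if "u \<in> ?U" for u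
    using that fin Suc_m card_Diff_singleton card_gt_0_iff[of ?U] by (auto simp: h_def)
  have sum_in: "(\<Sum>u\<in>?U. F (insert (u, Suc m) R)) = g h * w Double_Ascent * pq_int p q h"
  proof -
    have "(\<Sum>u\<in>?U. F (insert (u, Suc m) R)) = (\<Sum>u\<in>?U. g h * w Double_Ascent * rank_weight p q ?U u)"
      by (rule sum.cong) (simp_all add: F_def open_sources_extensions ins_weight_extensions card_swap)
    then show ?thesis by (simp add: sum_distrib_left[symmetric] sum_rank_weight fin h_def)
  qed
  have sum_out: "(\<Sum>v\<in>?V. F (insert (Suc m, v) R)) = g h * w Double_Descent * q * pq_int p q h"
  proof -
    have "(\<Sum>v\<in>?V. F (insert (Suc m, v) R)) = (\<Sum>v\<in>?V. g h * w Double_Descent * q * rank_weight p q ?V v)"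
      by (rule sum.cong) (simp_all add: F_def open_sources_extensions ins_weight_extensions h_def)
    then show ?thesis by (simp add: sum_distrib_left[symmetric] sum_rank_weight fin card_V)
  qed
  have sum_in_out: "(\<Sum>(u, v)\<in>?U \<times> ?V. F (insert (u, Suc m) (insert (Suc m, v) R)))
      = g (h - 1) * w Peak * pq_int p q h ^ 2"
  proof -
    have "(\<Sum>(u, v)\<in>?U \<times> ?V. F (insert (u, Suc m) (insert (Suc m, v) R)))
        = (\<Sum>u\<in>?U. \<Sum>v\<in>?V. g (h - 1) * w Peak * (rank_weight p q ?U u * rank_weight p q ?V v))"
      unfolding sum.cartesian_product
      by (rule sum.cong) (auto simp: F_def open_sources_extensions ins_weight_extensions h_def)
    also have "\<dots> = g (h - 1) * w Peak
        * ((\<Sum>u\<in>?U. rank_weight p q ?U u) * (\<Sum>v\<in>?V. rank_weight p q ?V v))"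
      by (subst sum_product) (simp add: sum_distrib_left)
    finally show ?thesis
      by (simp add: sum_rank_weight fin card_V h_def power2_eq_square)
  qed
  show ?thesis
    unfolding F_def[symmetric] sum_extensions[OF R] sum_in sum_out sum_in_out
    by (simp add: F_def transfer_def open_sources_extensions ins_weight_extensions Suc_m fin card_V
        flip: h_def) (simp add: algebra_simps)
qed

end

lemma sum_partial_injections_Suc:
  "(\<Sum>S\<in>partial_injections (Suc m). g (card (open_sources (Suc m) S)) * path_weight p q w (Suc m) S)
   = (\<Sum>R\<in>partial_injections m. transfer p q w g (card (open_sources m R)) * path_weight p q w m R)"
proof -
  let ?F = "\<lambda>S. g (card (open_sources (Suc m) S)) * path_weight p q w (Suc m) S"
  have "(\<Sum>S\<in>partial_injections (Suc m). ?F S)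
      = (\<Sum>R\<in>partial_injections m. \<Sum>S\<in>{S \<in> partial_injections (Suc m). trunc m S = R}. ?F S)"
    by (rule sum.group[symmetric])
      (use finite_partial_injections trunc_in_partial_injections in auto)
  also have "\<dots> = (\<Sum>R\<in>partial_injections m.
      transfer p q w g (card (open_sources m R)) * path_weight p q w m R)"
  proof (rule sum.cong[OF refl])
    fix R assume R: "R \<in> partial_injections m"
    have "(\<Sum>S\<in>{S \<in> partial_injections (Suc m). trunc m S = R}. ?F S)
        = (\<Sum>S\<in>extensions m R.
             path_weight p q w m R * (g (card (open_sources (Suc m) S)) * ins_weight p q w m S))"
      unfolding fibre_trunc[OF R, symmetric] by (rule sum.cong) auto
    also have "\<dots> = transfer p q w g (card (open_sources m R)) * path_weight p q w m R"
      by (simp add: sum_distrib_left[symmetric] sum_extensions_ins_weight[OF R])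
    finally show "(\<Sum>S\<in>{S \<in> partial_injections (Suc m). trunc m S = R}. ?F S)
        = transfer p q w g (card (open_sources m R)) * path_weight p q w m R" .
  qed
  finally show ?thesis .
qed

lemma transfer_rescale:
  assumes "w1 Valley = \<mu> * w2 Valley" and "w2 Peak = \<mu> * w1 Peak"
    and "w1 Double_Ascent + q * w1 Double_Descent = w2 Double_Ascent + q * w2 Double_Descent"
    and "w1 Fixed_Point = w2 Fixed_Point"
  shows "transfer p q w2 (\<lambda>h. g h * \<mu> ^ h) h = transfer p q w1 g h * \<mu> ^ h"
  using assms by (cases h) (simp_all add: transfer_def algebra_simps)

lemma sum_partial_injections_rescale:
  assumes "w1 Valley = \<mu> * w2 Valley" and "w2 Peak = \<mu> * w1 Peak"
    and "w1 Double_Ascent + q * w1 Double_Descent = w2 Double_Ascent + q * w2 Double_Descent"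
    and "w1 Fixed_Point = w2 Fixed_Point"
  shows "(\<Sum>R\<in>partial_injections m. g (card (open_sources m R)) * path_weight p q w1 m R)
       = (\<Sum>R\<in>partial_injections m.
            g (card (open_sources m R)) * \<mu> ^ card (open_sources m R) * path_weight p q w2 m R)"
proof (induction m arbitrary: g)
  case 0
  show ?case by (simp add: partial_injections_0 open_sources_def)
next
  case (Suc m)
  have "(\<Sum>S\<in>partial_injections (Suc m). g (card (open_sources (Suc m) S)) * path_weight p q w1 (Suc m) S)
      = (\<Sum>R\<in>partial_injections m.
           transfer p q w1 g (card (open_sources m R)) * \<mu> ^ card (open_sources m R)
           * path_weight p q w2 m R)"
    unfolding sum_partial_injections_Suc Suc.IH ..
  also have "\<dots> = (\<Sum>R\<in>partial_injections m.
      transfer p q w2 (\<lambda>h. g h * \<mu> ^ h) (card (open_sources m R)) * path_weight p q w2 m R)"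
    by (simp add: transfer_rescale[OF assms])
  finally show ?case
    using sum_partial_injections_Suc[of "\<lambda>h. g h * \<mu> ^ h" m p q w2] by simp
qed

section \<open>Permutations as complete partial injections\<close>

definition perm_graph :: "nat \<Rightarrow> (nat \<Rightarrow> nat) \<Rightarrow> (nat \<times> nat) set" where
  "perm_graph m \<sigma> = {(i, \<sigma> i) | i. i \<in> {1..m} \<and> \<sigma> i \<in> {1..m}}"

definition cycle_type_of :: "(nat \<Rightarrow> nat) \<Rightarrow> nat \<Rightarrow> cycle_type" where
  "cycle_type_of \<sigma> x =
     (if \<sigma> x = x then Fixed_Point
      else if inv \<sigma> x < x \<and> \<sigma> x < x then Peak
      else if inv \<sigma> x < x then Double_Ascent
      else if \<sigma> x < x then Double_Descent
      else Valley)"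

lemma mem_perm_graph: "(a, b) \<in> perm_graph m \<sigma> \<longleftrightarrow> b = \<sigma> a \<and> a \<in> {1..m} \<and> b \<in> {1..m}"
  by (auto simp: perm_graph_def)

lemma trunc_perm_graph: "trunc k (perm_graph (Suc k) \<sigma>) = perm_graph k \<sigma>"
  by (auto simp: trunc_def perm_graph_def)

lemma path_weight_perm_graph_prod:
  "path_weight p q w m (perm_graph m \<sigma>) = (\<Prod>k<m. ins_weight p q w k (perm_graph (Suc k) \<sigma>))"
  by (induction m) (simp_all add: trunc_perm_graph)

definition upper_cros :: "(nat \<Rightarrow> nat) \<Rightarrow> nat \<Rightarrow> nat" where
  "upper_cros \<sigma> j = card {w. j < w \<and> w < \<sigma> j \<and> \<sigma> j < \<sigma> w}"

text \<open>The nestings and crossings charged to the insertion of \<open>x\<close>: those of the upper arc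
  \<open>inv \<sigma> x \<mapsto> x\<close> ending at \<open>x\<close> and those of the lower arc \<open>x \<mapsto> \<sigma> x\<close> starting at \<open>x\<close>.\<close>

definition nest_at :: "nat \<Rightarrow> (nat \<Rightarrow> nat) \<Rightarrow> nat \<Rightarrow> nat" where
  "nest_at n \<sigma> x = (if inv \<sigma> x < x then nest_i n \<sigma> (inv \<sigma> x) else 0)
     + (if \<sigma> x \<le> x then nest_i n \<sigma> x else 0)"

definition cros_at :: "nat \<Rightarrow> (nat \<Rightarrow> nat) \<Rightarrow> nat \<Rightarrow> nat" where
  "cros_at n \<sigma> x = (if inv \<sigma> x < x then upper_cros \<sigma> (inv \<sigma> x) else 0)
     + (if \<sigma> x < x then cros_i n \<sigma> x else 0)"

context
  fixes n :: nat and \<sigma> :: "nat \<Rightarrow> nat"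
  assumes \<sigma>: "\<sigma> permutes {1..n}"
begin

lemma permutes_pos: "1 \<le> i \<Longrightarrow> 1 \<le> \<sigma> i" "1 \<le> i \<Longrightarrow> 1 \<le> inv \<sigma> i"
  using permutes_in_image[OF \<sigma>, of i] permutes_not_in[OF \<sigma>, of i]
    permutes_in_image[OF permutes_inv[OF \<sigma>], of i] permutes_not_in[OF permutes_inv[OF \<sigma>], of i]
  by (cases "i \<le> n"; simp)+

lemma perm_inv_simps [simp]: "\<sigma> (inv \<sigma> x) = x" "inv \<sigma> (\<sigma> x) = x"
  using permutes_inverses[OF \<sigma>] by simp_all

lemma inv_perm_eq_iff: "inv \<sigma> y = x \<longleftrightarrow> \<sigma> x = y"
  by (metis perm_inv_simps)

lemma perm_graph_in_partial_injections: "perm_graph m \<sigma> \<in> partial_injections m"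
  unfolding partial_injections_def single_valued_def
  by (auto simp: mem_perm_graph inj_eq[OF permutes_inj[OF \<sigma>]])

lemma open_sources_perm_graph: "open_sources k (perm_graph k \<sigma>) = {w \<in> {1..k}. k < \<sigma> w}"
proof -
  have "w \<in> Domain (perm_graph k \<sigma>) \<longleftrightarrow> w \<in> {1..k} \<and> \<sigma> w \<in> {1..k}" for w
    by (auto simp: Domain_iff mem_perm_graph)
  then show ?thesis
    using permutes_pos(1) unfolding open_sources_def set_eq_iff by (metis (lifting) Diff_iff
        atLeastAtMost_iff mem_Collect_eq not_le)
qed

lemma open_targets_perm_graph: "open_targets k (perm_graph k \<sigma>) = {w \<in> {1..k}. k < inv \<sigma> w}"
proof -
  have "w \<in> Range (perm_graph k \<sigma>) \<longleftrightarrow> w \<in> {1..k} \<and> inv \<sigma> w \<in> {1..k}" for w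
    by (auto simp: Range_iff mem_perm_graph) (metis perm_inv_simps(1))
  then show ?thesis
    using permutes_pos(2) unfolding open_targets_def set_eq_iff by (metis (lifting) Diff_iff
        atLeastAtMost_iff mem_Collect_eq not_le)
qed

lemma ins_weight_perm_graph:
  fixes k :: nat
  defines "x \<equiv> Suc k" and "U \<equiv> {w \<in> {1..k}. k < \<sigma> w}" and "V \<equiv> {w \<in> {1..k}. k < inv \<sigma> w}"
  shows "ins_weight p q w k (perm_graph x \<sigma>) =
    (if \<sigma> x = x then w Fixed_Point * p ^ card V
     else if inv \<sigma> x < x \<and> \<sigma> x < x then
       w Peak * rank_weight p q U (inv \<sigma> x) * rank_weight p q V (\<sigma> x)
     else if inv \<sigma> x < x then w Double_Ascent * rank_weight p q U (inv \<sigma> x)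
     else if \<sigma> x < x then w Double_Descent * q * rank_weight p q V (\<sigma> x)
     else w Valley)"
proof -
  have "{u \<in> {1..k}. (u, x) \<in> perm_graph x \<sigma>} = {u \<in> {1..k}. u = inv \<sigma> x}"
    by (auto simp: mem_perm_graph x_def)
  also have "\<dots> = (if inv \<sigma> x < x then {inv \<sigma> x} else {})"
    using permutes_pos(2)[of x] by (auto simp: x_def)
  finally have "{u \<in> {1..k}. (u, x) \<in> perm_graph x \<sigma>} = (if inv \<sigma> x < x then {inv \<sigma> x} else {})" .
  moreover have "{v \<in> {1..k}. (x, v) \<in> perm_graph x \<sigma>} = (if \<sigma> x < x then {\<sigma> x} else {})"
    using permutes_pos(1)[of x] by (auto simp: mem_perm_graph x_def)
  moreover have "(x, x) \<in> perm_graph x \<sigma> \<longleftrightarrow> \<sigma> x = x"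
    by (auto simp: perm_graph_def x_def)
  ultimately show ?thesis
    unfolding ins_weight_def Let_def x_def trunc_perm_graph open_sources_perm_graph
      open_targets_perm_graph U_def V_def
    by simp
qed

lemma perm_in_range: "i \<in> {1..n} \<Longrightarrow> \<sigma> i \<in> {1..n}" "i \<in> {1..n} \<Longrightarrow> inv \<sigma> i \<in> {1..n}"
  using permutes_in_image[OF \<sigma>] permutes_in_image[OF permutes_inv[OF \<sigma>]] by blast+

lemma card_perm_image: "card {j \<in> {1..n}. P j (\<sigma> j)} = card {w \<in> {1..n}. P (inv \<sigma> w) w}"
proof -
  have "\<sigma> ` {j \<in> {1..n}. P j (\<sigma> j)} = {w \<in> {1..n}. P (inv \<sigma> w) w}"
  proof
    show "\<sigma> ` {j \<in> {1..n}. P j (\<sigma> j)} \<subseteq> {w \<in> {1..n}. P (inv \<sigma> w) w}"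
      using perm_in_range(1) by (simp add: image_subset_iff)
  next
    show "{w \<in> {1..n}. P (inv \<sigma> w) w} \<subseteq> \<sigma> ` {j \<in> {1..n}. P j (\<sigma> j)}"
    proof
      fix w assume "w \<in> {w \<in> {1..n}. P (inv \<sigma> w) w}"
      then have "inv \<sigma> w \<in> {j \<in> {1..n}. P j (\<sigma> j)}" using perm_in_range(2) by simp
      then show "w \<in> \<sigma> ` {j \<in> {1..n}. P j (\<sigma> j)}" by (rule rev_image_eqI) simp
    qed
  qed
  moreover have "inj_on \<sigma> {j \<in> {1..n}. P j (\<sigma> j)}"
    using permutes_inj[OF \<sigma>] by (rule inj_on_subset) simp
  ultimately show ?thesis
    using card_image[of \<sigma> "{j \<in> {1..n}. P j (\<sigma> j)}"] by simp
qed

lemma nest_i_lower: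
  assumes "\<sigma> x \<le> x"
  shows "nest_i n \<sigma> x = card {w \<in> {1..n}. w < \<sigma> x \<and> x < inv \<sigma> w}"
proof -
  have "nest_i n \<sigma> x = card {j \<in> {1..n}. \<sigma> j < \<sigma> x \<and> x < j}"
    unfolding nest_i_def using assms by (intro arg_cong[where f = card]) auto
  then show ?thesis
    using card_perm_image[of "\<lambda>j y. y < \<sigma> x \<and> x < j"] by simp
qed

lemma cros_i_lower:
  assumes "\<sigma> x < x"
  shows "cros_i n \<sigma> x = card {w \<in> {1..n}. \<sigma> x < w \<and> w \<le> x \<and> x < inv \<sigma> w}"
proof -
  have "cros_i n \<sigma> x = card {j \<in> {1..n}. \<sigma> x < \<sigma> j \<and> \<sigma> j \<le> x \<and> x < j}"
    unfolding cros_i_def using assms by (intro arg_cong[where f = card]) auto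
  then show ?thesis
    using card_perm_image[of "\<lambda>j y. \<sigma> x < y \<and> y \<le> x \<and> x < j"] by simp
qed

lemma less_perm_iff_Suc_less:
  "k < \<sigma> w \<longleftrightarrow> Suc k < \<sigma> w \<or> w = inv \<sigma> (Suc k)"
  "k < inv \<sigma> w \<longleftrightarrow> Suc k < inv \<sigma> w \<or> w = \<sigma> (Suc k)"
proof -
  have "w = inv \<sigma> (Suc k) \<longleftrightarrow> \<sigma> w = Suc k" "w = \<sigma> (Suc k) \<longleftrightarrow> inv \<sigma> w = Suc k"
    using inv_perm_eq_iff[of "Suc k" w] inv_perm_eq_iff[of w "Suc k"] by auto
  then show "k < \<sigma> w \<longleftrightarrow> Suc k < \<sigma> w \<or> w = inv \<sigma> (Suc k)"
    "k < inv \<sigma> w \<longleftrightarrow> Suc k < inv \<sigma> w \<or> w = \<sigma> (Suc k)"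
    by linarith+
qed

lemma rank_weight_upper_arc:
  assumes "k < n" and "inv \<sigma> (Suc k) < Suc k"
  shows "rank_weight p q {w \<in> {1..k}. k < \<sigma> w} (inv \<sigma> (Suc k))
           = p ^ nest_i n \<sigma> (inv \<sigma> (Suc k)) * q ^ upper_cros \<sigma> (inv \<sigma> (Suc k))"
proof -
  define a where "a = inv \<sigma> (Suc k)"
  have "\<sigma> a = Suc k" "1 \<le> a" "a \<le> k"
    using assms permutes_pos(2)[of "Suc k"] by (simp_all add: a_def)
  then have "{w \<in> {w \<in> {1..k}. k < \<sigma> w}. w < a}
      = {j \<in> {1..n}. (j < a \<and> a < \<sigma> a \<and> \<sigma> a < \<sigma> j) \<or> (\<sigma> j < \<sigma> a \<and> \<sigma> a \<le> a \<and> a < j)}"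
    and "{w \<in> {w \<in> {1..k}. k < \<sigma> w}. a < w} = {w. a < w \<and> w < \<sigma> a \<and> \<sigma> a < \<sigma> w}"
    using assms(1) by (auto simp: less_perm_iff_Suc_less(1)[where k = k] a_def[symmetric])
  then show ?thesis
    unfolding rank_weight_def nest_i_def upper_cros_def a_def by simp
qed

lemma card_lower_arc_nest:
  assumes "k < n" and "\<sigma> (Suc k) \<le> Suc k"
  shows "card {w \<in> {w \<in> {1..k}. k < inv \<sigma> w}. w < \<sigma> (Suc k)} = nest_i n \<sigma> (Suc k)"
proof -
  have "{w \<in> {w \<in> {1..k}. k < inv \<sigma> w}. w < \<sigma> (Suc k)}
      = {w \<in> {1..n}. w < \<sigma> (Suc k) \<and> Suc k < inv \<sigma> w}"
    using assms by (auto simp: less_perm_iff_Suc_less(2)[where k = k])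
  then show ?thesis using nest_i_lower[OF assms(2)] by simp
qed

lemma card_lower_arc_cros:
  assumes "k < n" and "\<sigma> (Suc k) < Suc k"
  shows "card {w \<in> {w \<in> {1..k}. k < inv \<sigma> w}. \<sigma> (Suc k) < w}
           + (if Suc k < inv \<sigma> (Suc k) then 1 else 0) = cros_i n \<sigma> (Suc k)"
proof -
  define W where "W = {w \<in> {w \<in> {1..k}. k < inv \<sigma> w}. \<sigma> (Suc k) < w}"
  have "{w \<in> {1..n}. \<sigma> (Suc k) < w \<and> w \<le> Suc k \<and> Suc k < inv \<sigma> w}
      = W \<union> (if Suc k < inv \<sigma> (Suc k) then {Suc k} else {})"
    using assms by (auto simp: W_def less_perm_iff_Suc_less(2)[where k = k] le_Suc_eq)
  moreover have "finite W" "Suc k \<notin> W" by (auto simp: W_def)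
  ultimately have "cros_i n \<sigma> (Suc k) = card W + (if Suc k < inv \<sigma> (Suc k) then 1 else 0)"
    using cros_i_lower[OF assms(2)] by simp
  then show ?thesis by (simp add: W_def)
qed

lemma ins_weight_perm_graph_eq:
  assumes "k < n"
  shows "ins_weight p q w k (perm_graph (Suc k) \<sigma>)
           = w (cycle_type_of \<sigma> (Suc k)) * p ^ nest_at n \<sigma> (Suc k) * q ^ cros_at n \<sigma> (Suc k)"
proof -
  define x a b where "x = Suc k" and "a = inv \<sigma> x" and "b = \<sigma> x"
  define V where "V = {w \<in> {1..k}. k < inv \<sigma> w}"
  have rank_V: "rank_weight p q V b * q ^ (if x < a then 1 else 0)
      = p ^ nest_i n \<sigma> x * q ^ cros_i n \<sigma> x" if "b < x"
    using card_lower_arc_nest[OF assms] card_lower_arc_cros[OF assms] that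
    by (simp add: rank_weight_def V_def x_def a_def b_def power_add[symmetric])
  have "a = x \<longleftrightarrow> b = x"
    unfolding a_def b_def inv_perm_eq_iff by auto
  then consider (fixed) "b = x" | (peak) "a < x" "b < x" | (ascent) "a < x" "x < b"
    | (descent) "x < a" "b < x" | (valley) "x < a" "x < b"
    by (metis linorder_neqE_nat)
  then show ?thesis
  proof cases
    case fixed
    have "{w \<in> V. w < b} = V" using fixed by (auto simp: V_def x_def)
    then have "card V = nest_i n \<sigma> x"
      using card_lower_arc_nest[OF assms] fixed by (simp add: V_def x_def b_def)
    then show ?thesis
      using fixed \<open>a = x \<longleftrightarrow> b = x\<close> unfolding x_def a_def b_def V_def
      by (simp add: ins_weight_perm_graph cycle_type_of_def nest_at_def cros_at_def)
  next
    case peak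
    then show ?thesis
      using rank_V rank_weight_upper_arc[OF assms] unfolding x_def a_def b_def V_def
      by (simp add: ins_weight_perm_graph cycle_type_of_def nest_at_def cros_at_def power_add)
  next
    case ascent
    then show ?thesis
      using rank_weight_upper_arc[OF assms] unfolding x_def a_def b_def
      by (simp add: ins_weight_perm_graph cycle_type_of_def nest_at_def cros_at_def)
  next
    case descent
    then show ?thesis
      using rank_V unfolding x_def a_def b_def V_def
      by (simp add: ins_weight_perm_graph cycle_type_of_def nest_at_def cros_at_def mult_ac)
  next
    case valley
    then show ?thesis
      unfolding x_def a_def b_def
      by (simp add: ins_weight_perm_graph cycle_type_of_def nest_at_def cros_at_def)
  qed
qed

lemma sum_inv_arcs:
  "(\<Sum>x\<in>{1..n}. if inv \<sigma> x < x then f (inv \<sigma> x) else 0)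
     = (\<Sum>i\<in>{1..n}. if i < \<sigma> i then f i else (0 :: 'a :: comm_monoid_add))"
  using sum.permute[OF \<sigma>, of "\<lambda>x. if inv \<sigma> x < x then f (inv \<sigma> x) else 0"]
  by (simp add: comp_def cong: if_cong)

lemma sum_nest_at: "(\<Sum>x\<in>{1..n}. nest_at n \<sigma> x) = nest n \<sigma>"
proof -
  have "(\<Sum>x\<in>{1..n}. nest_at n \<sigma> x)
      = (\<Sum>i\<in>{1..n}. if i < \<sigma> i then nest_i n \<sigma> i else 0)
        + (\<Sum>x\<in>{1..n}. if \<sigma> x \<le> x then nest_i n \<sigma> x else 0)"
    by (simp only: nest_at_def sum.distrib sum_inv_arcs)
  also have "\<dots> = nest n \<sigma>"
    unfolding nest_def sum.distrib[symmetric] by (rule sum.cong) auto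
  finally show ?thesis .
qed

text \<open>Both sides count the pairs of upper arcs \<open>j \<mapsto> \<sigma> j\<close>, \<open>i \<mapsto> \<sigma> i\<close> with
  \<open>j < i < \<sigma> j < \<sigma> i\<close>, grouped by \<open>j\<close> on the left and by \<open>i\<close> on the right.\<close>

lemma sum_upper_cros:
  "(\<Sum>i\<in>{1..n}. if i < \<sigma> i then upper_cros \<sigma> i else 0)
     = (\<Sum>i\<in>{1..n}. if i < \<sigma> i then cros_i n \<sigma> i else 0)"
proof -
  define Q where "Q j i \<longleftrightarrow> j < i \<and> i < \<sigma> j \<and> \<sigma> j < \<sigma> i" for j i
  have "(if j < \<sigma> j then upper_cros \<sigma> j else 0) = card {i \<in> {1..n}. Q j i}"
    if "j \<in> {1..n}" for j
  proof (cases "j < \<sigma> j")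
    case True
    have "{i. j < i \<and> i < \<sigma> j \<and> \<sigma> j < \<sigma> i} = {i \<in> {1..n}. Q j i}"
      using that perm_in_range(1)[OF that] by (auto simp: Q_def)
    then show ?thesis using True by (simp add: upper_cros_def)
  qed (auto simp: Q_def)
  moreover have "(if i < \<sigma> i then cros_i n \<sigma> i else 0) = card {j \<in> {1..n}. Q j i}" for i
  proof (cases "i < \<sigma> i")
    case True
    then have "{j \<in> {1..n}. (j < i \<and> i < \<sigma> j \<and> \<sigma> j < \<sigma> i) \<or> (\<sigma> i < \<sigma> j \<and> \<sigma> j \<le> i \<and> i < j)}
        = {j \<in> {1..n}. Q j i}" by (auto simp: Q_def)
    then show ?thesis using True by (simp add: cros_i_def)
  qed (auto simp: Q_def)
  moreover have "(\<Sum>j\<in>{1..n}. card {i \<in> {1..n}. Q j i}) = (\<Sum>i\<in>{1..n}. card {j \<in> {1..n}. Q j i})"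
    by (rule sum_multicount_gen) auto
  ultimately show ?thesis
    by simp
qed

lemma sum_cros_at: "(\<Sum>x\<in>{1..n}. cros_at n \<sigma> x) = cros n \<sigma>"
proof -
  have "(\<Sum>x\<in>{1..n}. cros_at n \<sigma> x)
      = (\<Sum>i\<in>{1..n}. if i < \<sigma> i then cros_i n \<sigma> i else 0)
        + (\<Sum>x\<in>{1..n}. if \<sigma> x < x then cros_i n \<sigma> x else 0)"
    by (simp only: cros_at_def sum.distrib sum_inv_arcs sum_upper_cros)
  also have "\<dots> = cros n \<sigma>"
    unfolding cros_def sum.distrib[symmetric]
    by (rule sum.cong) (auto simp: cros_i_def not_less_iff_gr_or_eq)
  finally show ?thesis .
qed

lemma path_weight_perm_graph:
  "path_weight p q w n (perm_graph n \<sigma>)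
     = p ^ nest n \<sigma> * q ^ cros n \<sigma> * (\<Prod>x\<in>{1..n}. w (cycle_type_of \<sigma> x))"
proof -
  have "path_weight p q w n (perm_graph n \<sigma>)
      = (\<Prod>x\<in>{1..n}. w (cycle_type_of \<sigma> x) * p ^ nest_at n \<sigma> x * q ^ cros_at n \<sigma> x)"
    by (simp add: path_weight_perm_graph_prod ins_weight_perm_graph_eq prod.atLeast1_atMost_eq)
  also have "\<dots> = (\<Prod>x\<in>{1..n}. w (cycle_type_of \<sigma> x))
      * p ^ (\<Sum>x\<in>{1..n}. nest_at n \<sigma> x) * q ^ (\<Sum>x\<in>{1..n}. cros_at n \<sigma> x)"
    by (simp add: prod.distrib power_sum)
  finally show ?thesis
    unfolding sum_nest_at sum_cros_at by (simp add: mult_ac)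
qed

end

lemma complete_partial_injection_perm_graph:
  assumes R: "R \<in> partial_injections n" and complete: "open_sources n R = {}"
  obtains \<sigma> where "\<sigma> permutes {1..n}" and "perm_graph n \<sigma> = R"
proof -
  note sub = partial_injectionsD(1)[OF R]
    and fn = partial_injectionsD(2)[OF R] and ij = partial_injectionsD(3)[OF R]
  define \<sigma> where "\<sigma> i = (if i \<in> {1..n} then THE y. (i, y) \<in> R else i)" for i
  have \<sigma>_R: "(i, \<sigma> i) \<in> R" if "i \<in> {1..n}" for i
  proof -
    have "i \<in> Domain R" using complete that unfolding open_sources_def by blast
    then obtain y where "(i, y) \<in> R" by blast
    moreover from this have "(THE y. (i, y) \<in> R) = y" using fn by blast
    ultimately show ?thesis using that by (simp add: \<sigma>_def)
  qed
  have "inj_on \<sigma> {1..n}"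
    by (rule inj_onI) (metis \<sigma>_R ij)
  moreover have "\<sigma> ` {1..n} \<subseteq> {1..n}"
    using \<sigma>_R sub by blast
  ultimately have "bij_betw \<sigma> {1..n} {1..n}"
    by (simp add: bij_betw_def endo_inj_surj)
  then have "\<sigma> permutes {1..n}"
    by (rule bij_imp_permutes) (auto simp: \<sigma>_def)
  moreover have "perm_graph n \<sigma> = R"
  proof (intro equalityI subsetI)
    fix e assume "e \<in> perm_graph n \<sigma>"
    then show "e \<in> R" using \<sigma>_R by (auto simp: perm_graph_def)
  next
    fix e assume e: "e \<in> R"
    then obtain a b where ab: "e = (a, b)" "a \<in> {1..n}" "b \<in> {1..n}" using sub by blast
    then have "b = \<sigma> a" using \<sigma>_R e fn by blast
    then show "e \<in> perm_graph n \<sigma>" using ab by (simp add: mem_perm_graph)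
  qed
  ultimately show ?thesis by (rule that)
qed

lemma bij_betw_perm_graph:
  "bij_betw (perm_graph n) (Sym n) {R \<in> partial_injections n. open_sources n R = {}}"
proof (rule bij_betw_imageI)
  show "inj_on (perm_graph n) (Sym n)"
  proof (rule inj_onI)
    fix \<sigma> \<tau> assume "\<sigma> \<in> Sym n" "\<tau> \<in> Sym n" and eq: "perm_graph n \<sigma> = perm_graph n \<tau>"
    then have \<sigma>: "\<sigma> permutes {1..n}" and \<tau>: "\<tau> permutes {1..n}" by (simp_all add: Sym_def)
    show "\<sigma> = \<tau>"
    proof
      fix i show "\<sigma> i = \<tau> i"
      proof (cases "i \<in> {1..n}")
        case True
        then have "(i, \<sigma> i) \<in> perm_graph n \<tau>"
          using eq perm_in_range[OF \<sigma>] by (simp add: mem_perm_graph flip: eq)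
        then show ?thesis by (simp add: mem_perm_graph)
      qed (simp add: permutes_not_in[OF \<sigma>] permutes_not_in[OF \<tau>])
    qed
  qed
  show "perm_graph n ` Sym n = {R \<in> partial_injections n. open_sources n R = {}}"
  proof (intro equalityI subsetI)
    fix R assume "R \<in> perm_graph n ` Sym n"
    then obtain \<sigma> where \<sigma>: "\<sigma> permutes {1..n}" and R: "R = perm_graph n \<sigma>"
      by (auto simp: Sym_def)
    have "open_sources n R = {}"
      using perm_in_range(1)[OF \<sigma>] by (force simp: R open_sources_perm_graph[OF \<sigma>])
    then show "R \<in> {R \<in> partial_injections n. open_sources n R = {}}"
      using perm_graph_in_partial_injections[OF \<sigma>] R by simp
  next
    fix R assume "R \<in> {R \<in> partial_injections n. open_sources n R = {}}"
    then show "R \<in> perm_graph n ` Sym n"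
      by (auto simp: Sym_def elim!: complete_partial_injection_perm_graph)
  qed
qed

section \<open>The cycle generating function\<close>

definition cycle_gf :: "nat \<Rightarrow> real \<Rightarrow> real \<Rightarrow> (cycle_type \<Rightarrow> real) \<Rightarrow> real" where
  "cycle_gf n p q w =
     (\<Sum>\<sigma>\<in>Sym n. p ^ nest n \<sigma> * q ^ cros n \<sigma> * (\<Prod>x\<in>{1..n}. w (cycle_type_of \<sigma> x)))"

lemma cycle_gf_partial_injections:
  "cycle_gf n p q w = (\<Sum>R\<in>partial_injections n.
     of_bool (card (open_sources n R) = 0) * path_weight p q w n R)"
proof -
  have "cycle_gf n p q w = (\<Sum>\<sigma>\<in>Sym n. path_weight p q w n (perm_graph n \<sigma>))"
    unfolding cycle_gf_def by (rule sum.cong) (simp_all add: Sym_def path_weight_perm_graph)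
  also have "\<dots> = (\<Sum>R\<in>{R \<in> partial_injections n. open_sources n R = {}}. path_weight p q w n R)"
    by (rule sum.reindex_bij_betw[OF bij_betw_perm_graph])
  also have "\<dots> = (\<Sum>R\<in>partial_injections n.
      if open_sources n R = {} then path_weight p q w n R else 0)"
    by (rule sum.inter_filter[OF finite_partial_injections])
  also have "\<dots> = (\<Sum>R\<in>partial_injections n.
      of_bool (card (open_sources n R) = 0) * path_weight p q w n R)"
    by (rule sum.cong) (simp_all add: finite_open_sources)
  finally show ?thesis .
qed

theorem cycle_gf_rescale:
  assumes "w1 Valley = \<mu> * w2 Valley" and "w2 Peak = \<mu> * w1 Peak"
    and "w1 Double_Ascent + q * w1 Double_Descent = w2 Double_Ascent + q * w2 Double_Descent"
    and "w1 Fixed_Point = w2 Fixed_Point"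
  shows "cycle_gf n p q w1 = cycle_gf n p q w2"
proof -
  have \<mu>_vanishes: "of_bool (h = 0) * \<mu> ^ h = (of_bool (h = 0) :: real)" for h
    by (cases h) simp_all
  show ?thesis
    unfolding cycle_gf_partial_injections
      sum_partial_injections_rescale[of w1 \<mu> w2 q "\<lambda>h. of_bool (h = 0)", OF assms] \<mu>_vanishes ..
qed

text \<open>Cycle valleys and cycle double ascents are exactly the excedances.\<close>

definition stat_weights :: "real \<Rightarrow> real \<Rightarrow> real \<Rightarrow> real \<Rightarrow> cycle_type \<Rightarrow> real" where
  "stat_weights c y z r t = c * (case t of
     Valley \<Rightarrow> z | Peak \<Rightarrow> y | Double_Ascent \<Rightarrow> z | Double_Descent \<Rightarrow> 1 | Fixed_Point \<Rightarrow> r)"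

lemma prod_stat_weights:
  assumes \<sigma>: "\<sigma> permutes {1..n}"
  shows "(\<Prod>x\<in>{1..n}. stat_weights c y z r (cycle_type_of \<sigma> x))
           = c ^ n * y ^ cpk n \<sigma> * z ^ exc n \<sigma> * r ^ fixp n \<sigma>"
proof -
  have "stat_weights c y z r (cycle_type_of \<sigma> x) = c * ((if inv \<sigma> x < x \<and> x > \<sigma> x then y else 1)
      * (if \<sigma> x > x then z else 1) * (if \<sigma> x = x then r else 1))" for x
    using inv_perm_eq_iff[OF \<sigma>, of x x]
    by (auto simp: stat_weights_def cycle_type_of_def not_less_iff_gr_or_eq)
  then show ?thesis
    by (simp add: prod.distrib prod.inter_filter[symmetric] cpk_def exc_def fixp_def mult_ac)
qed

lemma Pgen_cpk_exc_fix_eq_cycle_gf: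
  "c ^ n * Pgen [nest n, cros n, cpk n, exc n, fixp n] (Sym n) [p, q, y, z, r]
     = cycle_gf n p q (stat_weights c y z r)"
  unfolding Pgen_def cycle_gf_def sum_distrib_left
proof (rule sum.cong)
  fix \<sigma> assume "\<sigma> \<in> Sym n"
  then have \<sigma>: "\<sigma> permutes {1..n}" by (simp add: Sym_def)
  show "c ^ n * prod_list (map2 (\<lambda>s t. t ^ s \<sigma>) [nest n, cros n, cpk n, exc n, fixp n] [p, q, y, z, r])
      = p ^ nest n \<sigma> * q ^ cros n \<sigma> * (\<Prod>x\<in>{1..n}. stat_weights c y z r (cycle_type_of \<sigma> x))"
    unfolding prod_stat_weights[OF \<sigma>] by (simp add: mult_ac)
qed simp

lemma Pgen_exc_fix_eq_cycle_gf:
  "Pgen [nest n, cros n, exc n, fixp n] (Sym n) [p, q, z, r] = cycle_gf n p q (stat_weights 1 1 z r)"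
  unfolding Pgen_def cycle_gf_def
proof (rule sum.cong)
  fix \<sigma> assume "\<sigma> \<in> Sym n"
  then have \<sigma>: "\<sigma> permutes {1..n}" by (simp add: Sym_def)
  show "prod_list (map2 (\<lambda>s t. t ^ s \<sigma>) [nest n, cros n, exc n, fixp n] [p, q, z, r])
      = p ^ nest n \<sigma> * q ^ cros n \<sigma> * (\<Prod>x\<in>{1..n}. stat_weights 1 1 z r (cycle_type_of \<sigma> x))"
    unfolding prod_stat_weights[OF \<sigma>] by (simp add: mult_ac)
qed simp

lemma Pgen_exc_fix_via_cpk:
  fixes p q t r x :: real
  assumes "1 + x \<noteq> 0" and "x + t \<noteq> 0" and "1 + x * t \<noteq> 0"
  shows "Pgen [nest n, cros n, exc n, fixp n] (Sym n) [p, q, t * q, r]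
    = ((1 + x * t) / (1 + x)) ^ n *
      Pgen [nest n, cros n, cpk n, exc n, fixp n] (Sym n)
        [p, q, (1 + x)^2 * t / ((x + t) * (1 + x * t)), q * (x + t) / (1 + x * t),
         (1 + x) * r / (1 + x * t)]"
proof -
  define c y z r' where "c = (1 + x * t) / (1 + x)"
    and "y = (1 + x)^2 * t / ((x + t) * (1 + x * t))" and "z = q * (x + t) / (1 + x * t)"
    and "r' = (1 + x) * r / (1 + x * t)"
  define \<mu> where "\<mu> = t * (1 + x) / (x + t)"
  have "t * q = \<mu> * (c * z)" and "c * y = \<mu>" and "t * q + q = c * z + q * c" and "r = c * r'"
    using assms unfolding c_def y_def z_def r'_def \<mu>_def
    by (simp_all add: divide_simps; simp add: algebra_simps power2_eq_square)+
  then have "cycle_gf n p q (stat_weights 1 1 (t * q) r) = cycle_gf n p q (stat_weights c y z r')"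
    by (intro cycle_gf_rescale[where \<mu> = \<mu>]) (simp_all add: stat_weights_def)
  then show ?thesis
    unfolding Pgen_exc_fix_eq_cycle_gf Pgen_cpk_exc_fix_eq_cycle_gf[symmetric] c_def y_def z_def r'_def .
qed

lemma Pgen_cpk_exc_fix_via_exc:
  fixes p q r t u v x :: real
  assumes t_eq: "u + v = t * (1 + u * v)" and x_eq: "(1 + u)^2 * v = x * (u + v) * (1 + u * v)"
    and "t \<noteq> 0" and "1 + u \<noteq> 0" and "1 + u * v \<noteq> 0"
  shows "Pgen [nest n, cros n, cpk n, exc n, fixp n] (Sym n) [p, q, x, q * t, r]
    = ((1 + u) / (1 + u * v)) ^ n *
      Pgen [nest n, cros n, exc n, fixp n] (Sym n) [p, q, q * v, (1 + u * v) * r / (1 + u)]"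
proof -
  define r' where "r' = (1 + u * v) * r / (1 + u)"
  have "u + v \<noteq> 0" using t_eq assms(3,5) by simp
  have "(1 + u)^2 * v / ((u + v) * (1 + u * v)) = x" and "q * (u + v) / (1 + u * v) = q * t"
    and "(1 + u) * r' / (1 + u * v) = r"
    using t_eq x_eq \<open>u + v \<noteq> 0\<close> assms(4,5) by (simp_all add: r'_def divide_simps)
  then have "Pgen [nest n, cros n, exc n, fixp n] (Sym n) [p, q, v * q, r']
      = ((1 + u * v) / (1 + u)) ^ n * Pgen [nest n, cros n, cpk n, exc n, fixp n] (Sym n) [p, q, x, q * t, r]"
    using Pgen_exc_fix_via_cpk[of u v n p q r'] \<open>u + v \<noteq> 0\<close> assms(4,5) by (simp add: add.commute)
  moreover have "((1 + u) / (1 + u * v)) ^ n * ((1 + u * v) / (1 + u)) ^ n = 1"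
    using assms(4,5) by (simp flip: power_mult_distrib)
  ultimately show ?thesis
    by (simp add: r'_def mult.commute mult.left_commute[of "((1 + u) / (1 + u * v)) ^ n"])
qed

lemma inverse_substitution:
  fixes t u v x :: real
  assumes "x \<noteq> 0" and "x \<noteq> 1" and "t \<noteq> 0" and "(1 + t)^2 - 4 * x * t \<ge> 0"
    and u: "u = (1 + t^2 - 2 * x * t - (1 - t) * sqrt ((1 + t)^2 - 4 * x * t)) / (2 * (1 - x) * t)"
    and v: "v = ((1 + t)^2 - 2 * x * t - (1 + t) * sqrt ((1 + t)^2 - 4 * x * t)) / (2 * x * t)"
  shows "u + v = t * (1 + u * v)" and "(1 + u)^2 * v = x * (u + v) * (1 + u * v)"
proof -
  define s where "s = sqrt ((1 + t)^2 - 4 * x * t)"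
  have s: "s^2 = (1 + t)^2 - 4 * x * t"
    using assms(4) by (simp add: s_def)
  have u': "u * (2 * (1 - x) * t) = 1 + t^2 - 2 * x * t - (1 - t) * s"
    and v': "v * (2 * x * t) = (1 + t)^2 - 2 * x * t - (1 + t) * s"
    using assms(1-3) by (simp_all add: u v s_def)
  have "(4 * x * (1 - x) * t^2) * ((u + v) - t * (1 + u * v)) = 0"
    using s u' v' by algebra
  then show "u + v = t * (1 + u * v)"
    using assms(1-3) by simp
  have "(4 * x * (1 - x) * t^2)^2 * (x * t) * ((1 + u)^2 * v - x * (u + v) * (1 + u * v)) = 0"
    using s u' v' by algebra
  then show "(1 + u)^2 * v = x * (u + v) * (1 + u * v)"
    using assms(1-3) by simp
qed

theorem theorem3p10:
  fixes n :: nat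
  assumes "n \<ge> 1"
  shows "(\<forall>p q t r x :: real. 1 + x \<noteq> 0 \<longrightarrow> x + t \<noteq> 0 \<longrightarrow> 1 + x * t \<noteq> 0 \<longrightarrow>
            Pgen [nest n, cros n, exc n, fixp n] (Sym n) [p, q, t * q, r]
            = ((1 + x * t) / (1 + x)) ^ n *
              Pgen [nest n, cros n, cpk n, exc n, fixp n] (Sym n)
                [p, q, (1 + x)^2 * t / ((x + t) * (1 + x * t)), q * (x + t) / (1 + x * t),
                 (1 + x) * r / (1 + x * t)])
       \<and> (\<forall>p q t r x u v :: real. x \<noteq> 0 \<longrightarrow> x \<noteq> 1 \<longrightarrow> t \<noteq> 0 \<longrightarrow> (1 + t)^2 - 4 * x * t \<ge> 0 \<longrightarrow>
            u = (1 + t^2 - 2 * x * t - (1 - t) * sqrt ((1 + t)^2 - 4 * x * t)) / (2 * (1 - x) * t) \<longrightarrow>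
            v = ((1 + t)^2 - 2 * x * t - (1 + t) * sqrt ((1 + t)^2 - 4 * x * t)) / (2 * x * t) \<longrightarrow>
            1 + u \<noteq> 0 \<longrightarrow> 1 + u * v \<noteq> 0 \<longrightarrow>
            Pgen [nest n, cros n, cpk n, exc n, fixp n] (Sym n) [p, q, x, q * t, r]
            = ((1 + u) / (1 + u * v)) ^ n *
              Pgen [nest n, cros n, exc n, fixp n] (Sym n) [p, q, q * v, (1 + u * v) * r / (1 + u)])"
  using Pgen_exc_fix_via_cpk Pgen_cpk_exc_fix_via_exc[OF inverse_substitution(1,2)] by blast

end
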